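(* Let $\beta$ be a well-posed Salem number of degree $6$ with minimal polynomial $$ P(x)=x^6-ax^{5}-bx^{4}-cx^{3}-bx^{2}-ax+1\qquad (a,b,c\in\mathbb Z). $$ Then $\beta$ is a Parry number, and moreover: (1) if $2\leq -b<c-a+2$, then $$ d_{\beta}(1)=(a-1)\,\big(a+b+1,\ c-a+b+1,\ c-a-1,\ 2a-c-1,\ 2a-c-1,\ c-a-1,\ c-a+b+1,\ a+b+1,\ a-2,\ a-2\big)^{\infty}; $$ (2) if $a-c+2<-b\leq 1$, then $$ d_{\beta}(1)=a\,\big(b+1,\ c-a-1,\ a-1,\ 2a+b-c+1,\ c-a-1,\ c-a-1,\ 2a+b-c+1,\ a-1,\ c-a-1,\ b+1,\ a-1,\ a-1\big)^{\infty}, $$ where each listed entry is a single digit and $(w)^\infty$ denotes infinite repetition of the block $w$.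
   Context: A Salem number is an algebraic integer $\beta>1$ all of whose Galois conjugates have modulus at most $1$, with at least one of modulus exactly $1$. For a polynomial $P(x)=x^6-ax^{5}-bx^{4}-cx^{3}-bx^{2}-ax+1$, its trace polynomial is $Q(y)=y^3-ay^2-(b+3)y-(c-2a)$, characterized by $P(x)/x^3=Q(x+x^{-1})$. A sextic Salem number $\beta$ with minimal polynomial $P$ of this form is well-posed if $Q$ has three real roots $\gamma,\alpha_1,\alpha_2$ with $-1<\alpha_1<0<\alpha_2<1<2<\gamma$. For a real $\beta>1$, the beta transformation is $T_\beta(x)=\beta x-\lfloor \beta x\rfloor$ on $[0,1)$; for $x\in[0,1)$ put $x_n=\lfloor \beta T_\beta^{n-1}(x)\rfloor$ and $d_\beta(x)=x_1x_2x_3\cdots$. The expansion of one is $d_\beta(1):=\lim_{\epsilon\downarrow 0} d_\beta(1-\epsilon)$ (limit in the product topology). $\beta$ is a Parry number if $d_\beta(1)$ is eventually periodic, i.e. of the form $x_1\cdots x_m(x_{m+1}\cdots x_{m+p})^\infty$. *)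

theory Defs
  imports Complex_Main "HOL-Computational_Algebra.Computational_Algebra"
begin

definition is_min_int_poly :: "real \<Rightarrow> int poly \<Rightarrow> bool" where
  "is_min_int_poly \<beta> P \<longleftrightarrow>
     lead_coeff P = 1 \<and>
     irreducible (map_poly (of_int :: int \<Rightarrow> rat) P) \<and>
     poly (map_poly (of_int :: int \<Rightarrow> real) P) \<beta> = 0"

definition salem_number :: "real \<Rightarrow> bool" where
  "salem_number \<beta> \<longleftrightarrow> \<beta> > 1 \<and>
     (\<exists>P. is_min_int_poly \<beta> P \<and>
        (\<forall>z. poly (map_poly (of_int :: int \<Rightarrow> complex) P) z = 0 \<and> z \<noteq> complex_of_real \<beta>
              \<longrightarrow> cmod z \<le> 1) \<and>
        (\<exists>z. poly (map_poly (of_int :: int \<Rightarrow> complex) P) z = 0 \<and> z \<noteq> complex_of_real \<beta>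
              \<and> cmod z = 1))"

definition sextic_P :: "int \<Rightarrow> int \<Rightarrow> int \<Rightarrow> int poly" where
  "sextic_P a b c = [:1, -a, -b, -c, -b, -a, 1:]"

definition trace_Q :: "int \<Rightarrow> int \<Rightarrow> int \<Rightarrow> real \<Rightarrow> real" where
  "trace_Q a b c y = y^3 - of_int a * y^2 - of_int (b+3) * y - of_int (c - 2*a)"

definition well_posed :: "int \<Rightarrow> int \<Rightarrow> int \<Rightarrow> bool" where
  "well_posed a b c \<longleftrightarrow>
     (\<exists>\<gamma> \<alpha>1 \<alpha>2. trace_Q a b c \<gamma> = 0 \<and> trace_Q a b c \<alpha>1 = 0 \<and> trace_Q a b c \<alpha>2 = 0 \<and>
        -1 < \<alpha>1 \<and> \<alpha>1 < 0 \<and> 0 < \<alpha>2 \<and> \<alpha>2 < 1 \<and> 2 < \<gamma>)"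

definition beta_T :: "real \<Rightarrow> real \<Rightarrow> real" where
  "beta_T \<beta> x = \<beta> * x - of_int \<lfloor>\<beta> * x\<rfloor>"

(* digit x_{n+1} of d_beta(x) (0-indexed: beta_digit beta x n = x_{n+1}) *)
definition beta_digit :: "real \<Rightarrow> real \<Rightarrow> nat \<Rightarrow> int" where
  "beta_digit \<beta> x n = \<lfloor>\<beta> * (beta_T \<beta> ^^ n) x\<rfloor>"

(* d is the expansion of one: d = lim_{eps -> 0+} d_beta(1 - eps) in the product topology
   (digits discrete), i.e. each digit eventually stabilises to d n. *)
definition is_expansion_of_one :: "real \<Rightarrow> (nat \<Rightarrow> int) \<Rightarrow> bool" where
  "is_expansion_of_one \<beta> d \<longleftrightarrow>
     (\<forall>n. eventually (\<lambda>\<epsilon>. beta_digit \<beta> (1 - \<epsilon>) n = d n) (at_right 0))"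

definition eventually_periodic :: "(nat \<Rightarrow> int) \<Rightarrow> bool" where
  "eventually_periodic d \<longleftrightarrow> (\<exists>m p. p > 0 \<and> (\<forall>n\<ge>m. d (n + p) = d n))"

definition parry_number :: "real \<Rightarrow> bool" where
  "parry_number \<beta> \<longleftrightarrow> \<beta> > 1 \<and> (\<exists>d. is_expansion_of_one \<beta> d \<and> eventually_periodic d)"

(* the infinite word  pre (blk)^infinity ; blk assumed nonempty *)
definition ult_periodic :: "int list \<Rightarrow> int list \<Rightarrow> nat \<Rightarrow> int" where
  "ult_periodic pre blk n =
     (if n < length pre then pre ! n else blk ! ((n - length pre) mod length blk))"

end

theory Submission
  imports Defs
begin

(*
  Let r n = beta^n - (sum of d k * beta^(n-1-k) for k < n) be the remainders of a digit
  sequence d, so that r 0 = 1 and r (n+1) = beta * r n - d n.  If all r n lie in (0, 1], then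
  the beta-orbit of 1 - eps is r n - beta^n * eps for as long as these numbers stay positive,
  so the digits of 1 - eps agree with d up to any given length once eps is small: d is the
  expansion of one.

  For the two candidate words, P(beta) = 0 makes the remainders periodic, because P divides
  (x^p - 1) * (x - d 0) - (sum of d (k+1) * x^(p-1-k) for k < p).  So the remainders take
  finitely many values.  Their minimum is positive since the digits are nonnegative and
  infinitely often positive, and their maximum is at most 1 since every suffix of d is below
  d 0 d 1 in the lexicographic order at its first two letters.  Well-posedness enters only
  through the signs of Q at -1, 0, 1 and 2, which are the linear inequalities on a, b, c
  making all these digit conditions hold.
*)

primrec digit_remainder :: "real \<Rightarrow> (nat \<Rightarrow> int) \<Rightarrow> nat \<Rightarrow> real" where
  "digit_remainder \<beta> d 0 = 1"
| "digit_remainder \<beta> d (Suc n) = \<beta> * digit_remainder \<beta> d n - of_int (d n)"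

lemma floor_beta_times_remainder:
  assumes "0 < \<beta>" "0 < \<epsilon>"
    and "\<beta>^Suc n * \<epsilon> < digit_remainder \<beta> d (Suc n)" "digit_remainder \<beta> d (Suc n) \<le> 1"
  shows "\<lfloor>\<beta> * (digit_remainder \<beta> d n - \<beta>^n * \<epsilon>)\<rfloor> = d n"
proof -
  have "\<beta> * (digit_remainder \<beta> d n - \<beta>^n * \<epsilon>)
      = of_int (d n) + (digit_remainder \<beta> d (Suc n) - \<beta>^Suc n * \<epsilon>)"
    by (simp add: algebra_simps)
  moreover have "0 < \<beta>^Suc n * \<epsilon>" using assms(1,2) by simp
  ultimately show ?thesis using assms(3,4) by (simp add: floor_eq_iff)
qed

lemma beta_T_iterate_one_minus:
  assumes "0 < \<beta>" "0 < \<epsilon>" and rem_le_1: "\<And>k. digit_remainder \<beta> d k \<le> 1"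
    and small: "\<forall>k\<le>n. \<beta>^k * \<epsilon> < digit_remainder \<beta> d k"
  shows "(beta_T \<beta> ^^ n) (1 - \<epsilon>) = digit_remainder \<beta> d n - \<beta>^n * \<epsilon>"
  using small
proof (induction n)
  case 0
  then show ?case by simp
next
  case (Suc n)
  then have IH: "(beta_T \<beta> ^^ n) (1 - \<epsilon>) = digit_remainder \<beta> d n - \<beta>^n * \<epsilon>"
    by simp
  have "\<lfloor>\<beta> * (digit_remainder \<beta> d n - \<beta>^n * \<epsilon>)\<rfloor> = d n"
    using Suc.prems rem_le_1[of "Suc n"] by (intro floor_beta_times_remainder[OF assms(1,2)]) auto
  then show ?case
    unfolding funpow.simps comp_def IH by (simp add: beta_T_def algebra_simps)
qed

lemma beta_digit_one_minus:
  assumes "0 < \<beta>" "0 < \<epsilon>" and "\<And>k. digit_remainder \<beta> d k \<le> 1"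
    and "\<forall>k\<le>Suc n. \<beta>^k * \<epsilon> < digit_remainder \<beta> d k"
  shows "beta_digit \<beta> (1 - \<epsilon>) n = d n"
proof -
  have "(beta_T \<beta> ^^ n) (1 - \<epsilon>) = digit_remainder \<beta> d n - \<beta>^n * \<epsilon>"
    using assms by (intro beta_T_iterate_one_minus) auto
  moreover have "\<lfloor>\<beta> * (digit_remainder \<beta> d n - \<beta>^n * \<epsilon>)\<rfloor> = d n"
    using assms(4) assms(3)[of "Suc n"] by (intro floor_beta_times_remainder[OF assms(1,2)]) auto
  ultimately show ?thesis by (simp add: beta_digit_def)
qed

lemma is_expansion_of_oneI:
  assumes "1 < \<beta>" and rem_unit: "\<And>k. 0 < digit_remainder \<beta> d k \<and> digit_remainder \<beta> d k \<le> 1"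
  shows "is_expansion_of_one \<beta> d"
  unfolding is_expansion_of_one_def
proof
  fix n
  have "\<forall>k\<in>{..Suc n}. eventually (\<lambda>\<epsilon>. \<beta>^k * \<epsilon> < digit_remainder \<beta> d k) (at_right 0)"
  proof
    fix k
    have "((\<lambda>\<epsilon>. \<beta>^k * \<epsilon>) \<longlongrightarrow> \<beta>^k * 0) (at_right (0::real))"
      by (intro tendsto_intros)
    then show "eventually (\<lambda>\<epsilon>. \<beta>^k * \<epsilon> < digit_remainder \<beta> d k) (at_right 0)"
      using rem_unit[of k] by (intro order_tendstoD(2)) auto
  qed
  then have "eventually (\<lambda>\<epsilon>. \<forall>k\<in>{..Suc n}. \<beta>^k * \<epsilon> < digit_remainder \<beta> d k) (at_right 0)"
    by (rule eventually_ball_finite[OF finite_atMost])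
  with eventually_at_right_less[of 0]
  show "eventually (\<lambda>\<epsilon>. beta_digit \<beta> (1 - \<epsilon>) n = d n) (at_right 0)"
    by eventually_elim (use assms in \<open>auto intro: beta_digit_one_minus\<close>)
qed

lemma digit_remainder_add:
  "digit_remainder \<beta> d (m + p) =
     \<beta>^p * digit_remainder \<beta> d m - (\<Sum>k<p. of_int (d (m + k)) * \<beta>^(p - 1 - k))"
proof (induction p)
  case 0
  then show ?case by simp
next
  case (Suc p)
  have "\<beta>^(p - k) = \<beta> * \<beta>^(p - 1 - k)" if "k < p" for k
    using that by (simp flip: power_Suc add: Suc_diff_Suc)
  then have sum_Suc: "\<beta> * (\<Sum>k<p. of_int (d (m + k)) * \<beta>^(p - 1 - k)) + of_int (d (m + p))
      = (\<Sum>k<Suc p. of_int (d (m + k)) * \<beta>^(Suc p - 1 - k))"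
    by (simp add: sum_distrib_left algebra_simps)
  have "digit_remainder \<beta> d (m + Suc p) = \<beta> * digit_remainder \<beta> d (m + p) - of_int (d (m + p))"
    by simp
  also have "\<dots> = \<beta>^Suc p * digit_remainder \<beta> d m
      - (\<beta> * (\<Sum>k<p. of_int (d (m + k)) * \<beta>^(p - 1 - k)) + of_int (d (m + p)))"
    by (simp add: Suc.IH algebra_simps)
  finally show ?case unfolding sum_Suc .
qed

lemma finite_range_digit_remainder:
  assumes "0 < p" and periodic: "\<forall>n\<ge>m. d (n + p) = d n"
    and "digit_remainder \<beta> d (m + p) = digit_remainder \<beta> d m"
  shows "finite (range (digit_remainder \<beta> d))"
proof -
  let ?r = "digit_remainder \<beta> d"
  have shift: "?r (n + p) = ?r n" if "m \<le> n" for n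
    using that
  proof (induction n rule: dec_induct)
    case base
    show ?case using assms(3) by (simp add: add.commute)
  next
    case (step n)
    then show ?case using periodic by simp
  qed
  have "?r n \<in> ?r ` {..<m + p}" for n
  proof (induction n rule: less_induct)
    case (less n)
    show ?case
    proof (cases "n < m + p")
      case False
      then have "?r n = ?r (n - p)" using shift[of "n - p"] by simp
      with False less.IH[of "n - p"] \<open>0 < p\<close> show ?thesis by simp
    qed simp
  qed
  then have "range ?r \<subseteq> ?r ` {..<m + p}" by blast
  then show ?thesis using finite_surj by blast
qed

lemma digit_remainder_pos:
  assumes "1 < \<beta>" and "\<forall>n. 0 \<le> d n" and "\<exists>\<^sub>F n in sequentially. 0 < d n"
    and finite: "finite (range (digit_remainder \<beta> d))"
  shows "0 < digit_remainder \<beta> d k"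
proof -
  let ?r = "digit_remainder \<beta> d"
  define t where "t = Min (range ?r)"
  have t_le: "t \<le> ?r n" for n unfolding t_def using finite by simp
  obtain n0 where n0: "?r n0 = t" unfolding t_def using Min_in[OF finite] by auto
  have "0 < t"
  proof (rule ccontr)
    assume "\<not> 0 < t"
    then have "(\<beta> - 1) * t \<le> 0" using \<open>1 < \<beta>\<close> by (simp add: mult_nonneg_nonpos)
    then have "\<beta> * t \<le> t" by (simp add: algebra_simps)
    have const: "?r n = t" if "n0 \<le> n" for n
      using that
    proof (induction n rule: dec_induct)
      case (step n)
      have "0 \<le> (of_int (d n) :: real)" using assms(2) by simp
      with step t_le[of "Suc n"] \<open>\<beta> * t \<le> t\<close> show ?case by simp
    qed (rule n0)
    obtain n where "n0 \<le> n" "0 < d n"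
      using assms(3) unfolding frequently_sequentially by blast
    then have "t = \<beta> * t - of_int (d n)" and "1 \<le> (of_int (d n) :: real)"
      using const[of n] const[of "Suc n"] by simp_all
    with \<open>\<beta> * t \<le> t\<close> show False by simp
  qed
  then show ?thesis using t_le[of k] by (rule less_le_trans)
qed

text \<open>If the maximal remainder s exceeded 1, restarting the digit sequence at a place where it
  is lexicographically smaller than d 0 d 1 would produce a remainder above s, since the
  excess s - 1 only grows under multiplication by \<beta>.\<close>
lemma digit_remainder_le_one:
  assumes "1 < \<beta>" and pos: "\<And>k. 0 < digit_remainder \<beta> d k"
    and finite: "finite (range (digit_remainder \<beta> d))"
    and lex: "\<forall>m\<ge>1. d m < d 0 \<or> d m = d 0 \<and> d (Suc m) < d 1"
  shows "digit_remainder \<beta> d k \<le> 1"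
proof -
  let ?r = "digit_remainder \<beta> d"
  define s where "s = Max (range ?r)"
  have le_s: "?r n \<le> s" for n unfolding s_def using finite by simp
  obtain m where m: "?r m = s" unfolding s_def using Max_in[OF finite] by auto
  have "s \<le> 1"
  proof (rule ccontr)
    assume "\<not> s \<le> 1"
    then have "s - 1 \<le> \<beta> * (s - 1)" using \<open>1 < \<beta>\<close> by simp
    moreover from this have "\<beta> * (s - 1) \<le> \<beta> * (\<beta> * (s - 1))"
      using \<open>1 < \<beta>\<close> by (intro mult_left_mono) auto
    ultimately have "s - 1 \<le> \<beta> * (\<beta> * (s - 1))" by (rule order_trans)
    have "1 \<le> m" using \<open>\<not> s \<le> 1\<close> m by (cases m) auto
    then consider "d m < d 0" | "d m = d 0" "d (Suc m) < d 1" using lex by blast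
    then show False
    proof cases
      case 1
      then have "of_int (d m) \<le> of_int (d 0) - (1::real)" by simp
      then have "?r (Suc m) \<ge> \<beta> * (s - 1) + ?r 1 + 1" using m by (simp add: algebra_simps)
      then show False using pos[of 1] le_s[of "Suc m"] \<open>s - 1 \<le> \<beta> * (s - 1)\<close> by simp
    next
      case 2
      then have "of_int (d (Suc m)) \<le> of_int (d 1) - (1::real)" by simp
      with 2 have "?r (Suc (Suc m)) \<ge> \<beta> * (\<beta> * (s - 1)) + ?r 2 + 1"
        using m by (simp add: numeral_2_eq_2 algebra_simps)
      then show False using pos[of 2] le_s[of "Suc (Suc m)"] \<open>s - 1 \<le> \<beta> * (\<beta> * (s - 1))\<close> by simp
    qed
  qed
  with le_s[of k] show ?thesis by (rule order_trans)
qed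

lemma is_expansion_of_one_if_lex_dominant:
  assumes "1 < \<beta>" and "\<forall>n. 0 \<le> d n" and "\<exists>\<^sub>F n in sequentially. 0 < d n"
    and "finite (range (digit_remainder \<beta> d))"
    and "\<forall>m\<ge>1. d m < d 0 \<or> d m = d 0 \<and> d (Suc m) < d 1"
  shows "is_expansion_of_one \<beta> d"
  using assms digit_remainder_pos[OF assms(1-4)] digit_remainder_le_one[OF assms(1) _ assms(4,5)]
  by (intro is_expansion_of_oneI) auto

lemma ult_periodic_shift:
  assumes "blk \<noteq> []" "length pre \<le> n"
  shows "ult_periodic pre blk (n + length blk) = ult_periodic pre blk n"
proof -
  have "n + length blk - length pre = (n - length pre) + length blk" using assms by simp
  then show ?thesis using assms unfolding ult_periodic_def by (simp del: add_diff_assoc2)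
qed

lemma eventually_periodic_ult_periodic:
  "blk \<noteq> [] \<Longrightarrow> eventually_periodic (ult_periodic pre blk)"
  unfolding eventually_periodic_def using ult_periodic_shift by blast

lemma ult_periodic_singleton_0 [simp]: "ult_periodic [d0] blk 0 = d0"
  by (simp add: ult_periodic_def)

lemma ult_periodic_singleton_Suc [simp]:
  "ult_periodic [d0] blk (Suc k) = blk ! (k mod length blk)"
  by (simp add: ult_periodic_def)

lemma is_expansion_of_one_ult_periodic:
  assumes "1 < \<beta>" "0 \<le> d0" "list_all (\<lambda>x. 0 \<le> x) blk" "\<exists>x\<in>set blk. 0 < x"
    and lex: "list_all2 (\<lambda>x y. x < d0 \<or> x = d0 \<and> y < hd blk) blk (rotate1 blk)"
    and cycle: "(\<beta>^length blk - 1) * (\<beta> - of_int d0) =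
      (\<Sum>k<length blk. of_int (blk ! k) * \<beta>^(length blk - 1 - k))"
  shows "is_expansion_of_one \<beta> (ult_periodic [d0] blk)"
proof -
  let ?d = "ult_periodic [d0] blk" and ?p = "length blk"
  obtain j where j: "j < ?p" "0 < blk ! j" using assms(4) by (auto simp: in_set_conv_nth)
  then have "0 < ?p" by (metis gr_zeroI not_less0)
  have "0 \<le> ?d n" for n
    using assms(2,3) \<open>0 < ?p\<close> by (cases n) (auto simp: list_all_length)
  moreover have "\<exists>\<^sub>F n in sequentially. 0 < ?d n"
    unfolding frequently_sequentially
  proof
    fix N
    have "N \<le> ?p * N" using \<open>0 < ?p\<close> by (simp add: Suc_le_eq)
    then have "N \<le> Suc (j + ?p * N)" by linarith
    moreover have "?d (Suc (j + ?p * N)) = blk ! j" using j by simp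
    ultimately show "\<exists>n\<ge>N. 0 < ?d n" using j by auto
  qed
  moreover have "finite (range (digit_remainder \<beta> ?d))"
  proof (rule finite_range_digit_remainder[OF \<open>0 < ?p\<close>])
    show "\<forall>n\<ge>1. ?d (n + ?p) = ?d n" using ult_periodic_shift[of blk "[d0]"] \<open>0 < ?p\<close> by simp
    have "(\<Sum>k<?p. of_int (?d (1 + k)) * \<beta>^(?p - 1 - k)) = (\<Sum>k<?p. of_int (blk ! k) * \<beta>^(?p - 1 - k))"
      by (intro sum.cong) auto
    then have "digit_remainder \<beta> ?d (1 + ?p) = \<beta>^?p * (\<beta> - d0) - (\<beta>^?p - 1) * (\<beta> - d0)"
      unfolding digit_remainder_add cycle by simp
    then show "digit_remainder \<beta> ?d (1 + ?p) = digit_remainder \<beta> ?d 1"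
      by (simp add: algebra_simps)
  qed
  moreover have "\<forall>m\<ge>1. ?d m < ?d 0 \<or> ?d m = ?d 0 \<and> ?d (Suc m) < ?d 1"
  proof (intro allI impI)
    fix m :: nat assume "1 \<le> m"
    then obtain k where m: "m = Suc k" by (cases m) auto
    have "k mod ?p < ?p" using \<open>0 < ?p\<close> by simp
    then have "blk ! (k mod ?p) < d0 \<or> blk ! (k mod ?p) = d0 \<and> blk ! (Suc (k mod ?p) mod ?p) < blk ! 0"
      using lex \<open>0 < ?p\<close> by (auto simp: list_all2_conv_all_nth nth_rotate1 hd_conv_nth)
    then show "?d m < ?d 0 \<or> ?d m = ?d 0 \<and> ?d (Suc m) < ?d 1"
      unfolding m by (simp add: mod_Suc_eq)
  qed
  ultimately show ?thesis by (intro is_expansion_of_one_if_lex_dominant[OF assms(1)]) auto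
qed

lemma monic_cubic_eq_prod:
  fixes p q r u v w t :: "'a::idom"
  assumes "u \<noteq> v" "u \<noteq> w" "v \<noteq> w"
    and "u^3 + p*u^2 + q*u + r = 0" "v^3 + p*v^2 + q*v + r = 0" "w^3 + p*w^2 + q*w + r = 0"
  shows "t^3 + p*t^2 + q*t + r = (t - u) * (t - v) * (t - w)"
proof -
  have "(u - v) * (u^2 + u*v + v^2 + p*(u + v) + q) = (u^3 + p*u^2 + q*u + r) - (v^3 + p*v^2 + q*v + r)"
    and "(u - w) * (u^2 + u*w + w^2 + p*(u + w) + q) = (u^3 + p*u^2 + q*u + r) - (w^3 + p*w^2 + q*w + r)"
    by (simp_all add: algebra_simps power2_eq_square power3_eq_cube)
  then have uv: "u^2 + u*v + v^2 + p*(u + v) + q = 0" and uw: "u^2 + u*w + w^2 + p*(u + w) + q = 0"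
    using assms by simp_all
  have "(v - w) * (u + v + w + p) = (u^2 + u*v + v^2 + p*(u + v) + q) - (u^2 + u*w + w^2 + p*(u + w) + q)"
    by (simp add: algebra_simps power2_eq_square)
  then have "(v - w) * (u + v + w + p) = 0" using uv uw by simp
  then have "u + v + w + p = 0" using assms(3) by simp
  then have p: "p = - (u + v + w)" by (metis add.commute neg_eq_iff_add_eq_0)
  have "q - (u*v + u*w + v*w) = u^2 + u*v + v^2 + p*(u + v) + q"
    unfolding p by (simp add: algebra_simps power2_eq_square)
  then have q: "q = u*v + u*w + v*w" using uv by simp
  have "r - (- (u*v*w)) = u^3 + p*u^2 + q*u + r"
    unfolding p q by (simp add: algebra_simps power2_eq_square power3_eq_cube)
  then have r: "r = - (u*v*w)" using assms(4) by (simp add: eq_neg_iff_add_eq_0)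
  show ?thesis unfolding p q r by (simp add: algebra_simps power2_eq_square power3_eq_cube)
qed

lemma well_posed_coeff_bounds:
  assumes "well_posed a b c"
  shows "c < 2*a \<and> a + b + 2 < c \<and> a - b - 2 < c \<and> 2 - 2*a - 2*b < c"
proof -
  obtain g x y where roots: "trace_Q a b c g = 0" "trace_Q a b c x = 0" "trace_Q a b c y = 0"
    and x: "-1 < x" "x < 0" and y: "0 < y" "y < 1" and g: "2 < g"
    using assms unfolding well_posed_def by blast
  have monic: "trace_Q a b c t = t^3 + (- a) * t^2 + (- (b + 3)) * t + (- (c - 2*a))" for t :: real
    unfolding trace_Q_def by (simp add: algebra_simps)
  have Q: "trace_Q a b c t = (t - g) * (t - x) * (t - y)" for t :: real
    using roots unfolding monic by (intro monic_cubic_eq_prod) (use x y g in auto)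
  have "trace_Q a b c (-1) < 0"
    unfolding Q using x y g by (intro mult_pos_neg mult_neg_neg) auto
  moreover have "0 < trace_Q a b c 0"
    unfolding Q using x y g by (intro mult_neg_neg mult_neg_pos) auto
  moreover have "trace_Q a b c 1 < 0"
    unfolding Q using x y g by (intro mult_neg_pos mult_neg_pos) auto
  moreover have "trace_Q a b c 2 < 0"
    unfolding Q using x y g by (intro mult_neg_pos mult_neg_pos) auto
  ultimately show ?thesis by (simp add: trace_Q_def)
qed

lemma poly_sextic_P:
  "poly (map_poly (of_int :: int \<Rightarrow> real) (sextic_P a b c)) x =
     x^6 - a*x^5 - b*x^4 - c*x^3 - b*x^2 - a*x + 1"
  by (simp add: sextic_P_def map_poly_pCons algebra_simps eval_nat_numeral)

lemma is_expansion_of_one_sextic_b_le_minus_2: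
  fixes \<beta> :: real and a b c :: int
  assumes "1 < \<beta>" and root: "\<beta>^6 - a*\<beta>^5 - b*\<beta>^4 - c*\<beta>^3 - b*\<beta>^2 - a*\<beta> + 1 = 0"
    and "c < 2*a" "a + b + 2 < c" "a - b - 2 < c" "2 - 2*a - 2*b < c" and "b \<le> -2"
  shows "is_expansion_of_one \<beta> (ult_periodic [a - 1]
    [a + b + 1, c - a + b + 1, c - a - 1, 2*a - c - 1, 2*a - c - 1,
     c - a - 1, c - a + b + 1, a + b + 1, a - 2, a - 2])"
    (is "is_expansion_of_one \<beta> (ult_periodic [a - 1] ?blk)")
proof (rule is_expansion_of_one_ult_periodic[OF assms(1)])
  have "(\<beta>^length ?blk - 1) * (\<beta> - of_int (a - 1)) - (\<Sum>k<length ?blk. of_int (?blk ! k) * \<beta>^(length ?blk - 1 - k))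
      = (\<beta>^6 - a*\<beta>^5 - b*\<beta>^4 - c*\<beta>^3 - b*\<beta>^2 - a*\<beta> + 1) * (\<beta>^5 + \<beta>^4 - \<beta>^3 - \<beta>^2 + \<beta> + 1)"
    by (simp add: eval_nat_numeral algebra_simps)
  then show "(\<beta>^length ?blk - 1) * (\<beta> - of_int (a - 1)) =
      (\<Sum>k<length ?blk. of_int (?blk ! k) * \<beta>^(length ?blk - 1 - k))"
    unfolding root mult_zero_left right_minus_eq .
qed (use assms(3-) in auto)

lemma is_expansion_of_one_sextic_b_ge_minus_1:
  fixes \<beta> :: real and a b c :: int
  assumes "1 < \<beta>" and root: "\<beta>^6 - a*\<beta>^5 - b*\<beta>^4 - c*\<beta>^3 - b*\<beta>^2 - a*\<beta> + 1 = 0"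
    and "c < 2*a" "a + b + 2 < c" "a - b - 2 < c" "2 - 2*a - 2*b < c" and "-1 \<le> b"
  shows "is_expansion_of_one \<beta> (ult_periodic [a]
    [b + 1, c - a - 1, a - 1, 2*a + b - c + 1, c - a - 1, c - a - 1,
     2*a + b - c + 1, a - 1, c - a - 1, b + 1, a - 1, a - 1])"
    (is "is_expansion_of_one \<beta> (ult_periodic [a] ?blk)")
proof (rule is_expansion_of_one_ult_periodic[OF assms(1)])
  have "(\<beta>^length ?blk - 1) * (\<beta> - of_int a) - (\<Sum>k<length ?blk. of_int (?blk ! k) * \<beta>^(length ?blk - 1 - k))
      = (\<beta>^6 - a*\<beta>^5 - b*\<beta>^4 - c*\<beta>^3 - b*\<beta>^2 - a*\<beta> + 1) * (\<beta>^7 - \<beta>^5 + \<beta>^4 + \<beta>^3 - \<beta>^2 + 1)"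
    by (simp add: eval_nat_numeral algebra_simps)
  then show "(\<beta>^length ?blk - 1) * (\<beta> - of_int a) =
      (\<Sum>k<length ?blk. of_int (?blk ! k) * \<beta>^(length ?blk - 1 - k))"
    unfolding root mult_zero_left right_minus_eq .
qed (use assms(3-) in auto)

theorem proposition1:
  fixes \<beta> :: real and a b c :: int
  assumes "salem_number \<beta>"
    and "is_min_int_poly \<beta> (sextic_P a b c)"
    and "well_posed a b c"
  shows "parry_number \<beta> \<and>
    (2 \<le> -b \<and> -b < c - a + 2 \<longrightarrow>
       is_expansion_of_one \<beta> (ult_periodic [a - 1]
         [a + b + 1, c - a + b + 1, c - a - 1, 2*a - c - 1, 2*a - c - 1,
          c - a - 1, c - a + b + 1, a + b + 1, a - 2, a - 2])) \<and>
    (a - c + 2 < -b \<and> -b \<le> 1 \<longrightarrow>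
       is_expansion_of_one \<beta> (ult_periodic [a]
         [b + 1, c - a - 1, a - 1, 2*a + b - c + 1, c - a - 1, c - a - 1,
          2*a + b - c + 1, a - 1, c - a - 1, b + 1, a - 1, a - 1]))"
proof -
  have "1 < \<beta>" using assms(1) unfolding salem_number_def by simp
  moreover have "\<beta>^6 - a*\<beta>^5 - b*\<beta>^4 - c*\<beta>^3 - b*\<beta>^2 - a*\<beta> + 1 = 0"
    using assms(2) unfolding is_min_int_poly_def poly_sextic_P by simp
  moreover note well_posed_coeff_bounds[OF assms(3)]
  ultimately have case1: "b \<le> -2 \<Longrightarrow> is_expansion_of_one \<beta> (ult_periodic [a - 1]
         [a + b + 1, c - a + b + 1, c - a - 1, 2*a - c - 1, 2*a - c - 1,
          c - a - 1, c - a + b + 1, a + b + 1, a - 2, a - 2])"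
    and case2: "-1 \<le> b \<Longrightarrow> is_expansion_of_one \<beta> (ult_periodic [a]
         [b + 1, c - a - 1, a - 1, 2*a + b - c + 1, c - a - 1, c - a - 1,
          2*a + b - c + 1, a - 1, c - a - 1, b + 1, a - 1, a - 1])"
    using is_expansion_of_one_sextic_b_le_minus_2 is_expansion_of_one_sextic_b_ge_minus_1 by auto
  have "parry_number \<beta>"
    unfolding parry_number_def using \<open>1 < \<beta>\<close> case1 case2
    by (cases "b \<le> -2") (force intro: eventually_periodic_ult_periodic)+
  with case1 case2 show ?thesis by auto
qed

end
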